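(* Let $S$ be a semiring and $M$ a left $S$-semimodule such that every subtractive subsemimodule of $M$ is a direct summand of $M$. Then every left $S$-semimodule is $M$-$e$-projective.
   Context: A semiring $(S,+,0,\cdot,1)$ consists of a commutative monoid $(S,+,0)$ and a monoid $(S,\cdot,1)$ with $0\neq 1$, absorbing zero and both distributive laws; left $S$-semimodules and $S$-linear maps are as for modules without subtraction. A subsemimodule $K\le M$ is subtractive if $m+k=k'$ with $k,k'\in K$ implies $m\in K$. $K$ is a direct summand of $M$ if $M=K\oplus K'$ for some subsemimodule $K'$, meaning every $m\in M$ can be written uniquely as $m=k+k'$ with $k\in K$, $k'\in K'$. For an $S$-linear $h:X\to Y$, $\mathrm{Ker}(h)=\{x\mid h(x)=0\}$; $h$ is $k$-normal if $h(x)=h(x')$ implies $x+k=x'+k'$ for some $k,k'\in\mathrm{Ker}(h)$. A short exact sequence $0\to L\xrightarrow{f}M\xrightarrow{g}N\to0$ (of semimodules or commutative monoids) means: $f$ injective, $f(L)=\mathrm{Ker}(g)$, $g$ surjective and $k$-normal. $P$ is $M$-$e$-projective if for every short exact sequence $0\to L\xrightarrow{f}M\xrightarrow{g}N\to0$ of left $S$-semimodules with middle term $M$, the sequence $0\to\mathrm{Hom}_S(P,L)\xrightarrow{f\circ-}\mathrm{Hom}_S(P,M)\xrightarrow{g\circ-}\mathrm{Hom}_S(P,N)\to0$ is a short exact sequence of commutative monoids (Hom-sets with pointwise addition). *)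

theory Defs
  imports Main
begin

text \<open>A left S-semimodule is a commutative monoid (a type of class comm_monoid_add,
the whole type being the carrier) together with a scalar multiplication sm.\<close>

definition semimodule :: "('s::semiring_1 \<Rightarrow> 'm::comm_monoid_add \<Rightarrow> 'm) \<Rightarrow> bool" where
  "semimodule sm \<longleftrightarrow>
     (\<forall>a b x. sm (a + b) x = sm a x + sm b x) \<and>
     (\<forall>a x y. sm a (x + y) = sm a x + sm a y) \<and>
     (\<forall>a b x. sm (a * b) x = sm a (sm b x)) \<and>
     (\<forall>x. sm 1 x = x) \<and>
     (\<forall>x. sm 0 x = 0) \<and>
     (\<forall>a. sm a 0 = 0)"

definition s_linear :: "('s::semiring_1 \<Rightarrow> 'x::comm_monoid_add \<Rightarrow> 'x) \<Rightarrow>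
    ('s \<Rightarrow> 'y::comm_monoid_add \<Rightarrow> 'y) \<Rightarrow> ('x \<Rightarrow> 'y) \<Rightarrow> bool" where
  "s_linear smX smY h \<longleftrightarrow>
     (\<forall>x y. h (x + y) = h x + h y) \<and> h 0 = 0 \<and> (\<forall>a x. h (smX a x) = smY a (h x))"

definition subsemimodule :: "('s::semiring_1 \<Rightarrow> 'm::comm_monoid_add \<Rightarrow> 'm) \<Rightarrow> 'm set \<Rightarrow> bool" where
  "subsemimodule sm K \<longleftrightarrow> 0 \<in> K \<and> (\<forall>x\<in>K. \<forall>y\<in>K. x + y \<in> K) \<and> (\<forall>a. \<forall>x\<in>K. sm a x \<in> K)"

definition subtractive :: "'m::comm_monoid_add set \<Rightarrow> bool" where
  "subtractive K \<longleftrightarrow> (\<forall>m k k'. k \<in> K \<longrightarrow> k' \<in> K \<longrightarrow> m + k = k' \<longrightarrow> m \<in> K)"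

definition direct_summand :: "('s::semiring_1 \<Rightarrow> 'm::comm_monoid_add \<Rightarrow> 'm) \<Rightarrow> 'm set \<Rightarrow> bool" where
  "direct_summand sm K \<longleftrightarrow> subsemimodule sm K \<and>
     (\<exists>K'. subsemimodule sm K' \<and> (\<forall>m. \<exists>!p. fst p \<in> K \<and> snd p \<in> K' \<and> m = fst p + snd p))"

definition Ker :: "('x \<Rightarrow> 'y::zero) \<Rightarrow> 'x set" where
  "Ker h = {x. h x = 0}"

definition k_normal :: "('x::comm_monoid_add \<Rightarrow> 'y::zero) \<Rightarrow> bool" where
  "k_normal h \<longleftrightarrow> (\<forall>x x'. h x = h x' \<longrightarrow> (\<exists>k\<in>Ker h. \<exists>k'\<in>Ker h. x + k = x' + k'))"

definition semimodule_ses :: "('s::semiring_1 \<Rightarrow> 'l::comm_monoid_add \<Rightarrow> 'l) \<Rightarrow>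
    ('s \<Rightarrow> 'm::comm_monoid_add \<Rightarrow> 'm) \<Rightarrow> ('s \<Rightarrow> 'n::comm_monoid_add \<Rightarrow> 'n) \<Rightarrow>
    ('l \<Rightarrow> 'm) \<Rightarrow> ('m \<Rightarrow> 'n) \<Rightarrow> bool" where
  "semimodule_ses smL smM smN f g \<longleftrightarrow>
     s_linear smL smM f \<and> s_linear smM smN g \<and>
     inj f \<and> range f = Ker g \<and> surj g \<and> k_normal g"

definition Hom :: "('s::semiring_1 \<Rightarrow> 'x::comm_monoid_add \<Rightarrow> 'x) \<Rightarrow>
    ('s \<Rightarrow> 'y::comm_monoid_add \<Rightarrow> 'y) \<Rightarrow> ('x \<Rightarrow> 'y) set" where
  "Hom smX smY = {h. s_linear smX smY h}"

definition monoid_ses :: "'a set \<Rightarrow> 'b set \<Rightarrow> 'c set \<Rightarrow> ('b \<Rightarrow> 'b \<Rightarrow> 'b) \<Rightarrow> 'c \<Rightarrow>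
    ('a \<Rightarrow> 'b) \<Rightarrow> ('b \<Rightarrow> 'c) \<Rightarrow> bool" where
  "monoid_ses A B C plusB zeroC F G \<longleftrightarrow>
     inj_on F A \<and> F ` A = {b \<in> B. G b = zeroC} \<and> G ` B = C \<and>
     (\<forall>b\<in>B. \<forall>b'\<in>B. G b = G b' \<longrightarrow>
        (\<exists>k\<in>{b \<in> B. G b = zeroC}. \<exists>k'\<in>{b \<in> B. G b = zeroC}. plusB b k = plusB b' k'))"

definition hom_sequence_exact :: "('s::semiring_1 \<Rightarrow> 'p::comm_monoid_add \<Rightarrow> 'p) \<Rightarrow>
    ('s \<Rightarrow> 'l::comm_monoid_add \<Rightarrow> 'l) \<Rightarrow> ('s \<Rightarrow> 'm::comm_monoid_add \<Rightarrow> 'm) \<Rightarrow>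
    ('s \<Rightarrow> 'n::comm_monoid_add \<Rightarrow> 'n) \<Rightarrow> ('l \<Rightarrow> 'm) \<Rightarrow> ('m \<Rightarrow> 'n) \<Rightarrow> bool" where
  "hom_sequence_exact smP smL smM smN f g \<longleftrightarrow>
     monoid_ses (Hom smP smL) (Hom smP smM) (Hom smP smN)
       (\<lambda>h h' x. h x + h' x) (\<lambda>x. 0) (\<lambda>h. f \<circ> h) (\<lambda>h. g \<circ> h)"

text \<open>P is M-e-projective, relative to all short exact sequences 0 \<rightarrow> L \<rightarrow> M \<rightarrow> N \<rightarrow> 0
whose outer terms live on the types 'l and 'n (these types are universally
quantified in the main theorem).\<close>
definition e_projective_wrt :: "('s::semiring_1 \<Rightarrow> 'p::comm_monoid_add \<Rightarrow> 'p) \<Rightarrow>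
    ('s \<Rightarrow> 'm::comm_monoid_add \<Rightarrow> 'm) \<Rightarrow> ('s \<Rightarrow> 'l::comm_monoid_add \<Rightarrow> 'l) \<Rightarrow>
    ('s \<Rightarrow> 'n::comm_monoid_add \<Rightarrow> 'n) \<Rightarrow> bool" where
  "e_projective_wrt smP smM smL smN \<longleftrightarrow>
     (\<forall>f g. semimodule_ses smL smM smN f g \<longrightarrow> hom_sequence_exact smP smL smM smN f g)"

end

theory Submission
  imports Defs
begin

text \<open>For a short exact sequence 0 \<rightarrow> L \<rightarrow> M \<rightarrow> N \<rightarrow> 0 the image of L is the kernel of
M \<rightarrow> N, which is subtractive and hence a direct summand of M, say M = Ker g \<oplus> K'.
The k-normality of g makes g injective on K', and as g maps K' onto N the inverse
of g restricted to K' is a linear splitting s of g, with m = p m + s (g m) for the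
linear projection p of M onto Ker g. Composition with s lifts homomorphisms
P \<rightarrow> N to P \<rightarrow> M, and for h, h' : P \<rightarrow> M with g \<circ> h = g \<circ> h' the decomposition gives
h + p \<circ> h' = h' + p \<circ> h, which is the k-normality of the Hom sequence.\<close>

lemma s_linear_comp:
  assumes "s_linear smX smY h" and "s_linear smY smZ g"
  shows "s_linear smX smZ (g \<circ> h)"
  using assms unfolding s_linear_def by simp

lemma s_linear_inv_comp:
  assumes "inj f" and f: "s_linear smL smM f" and h: "s_linear smP smM h"
    and "range h \<subseteq> range f"
  shows "s_linear smP smL (inv f \<circ> h)"
proof -
  have f_inv_h: "f (inv f (h x)) = h x" for x
    using assms(4) by (intro f_inv_into_f) auto
  have inv_f: "inv f (f y) = y" for y
    using \<open>inj f\<close> by simp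
  show ?thesis
    unfolding s_linear_def comp_def
  proof (intro conjI allI)
    fix x y
    have "h (x + y) = f (inv f (h x) + inv f (h y))"
      using f h f_inv_h unfolding s_linear_def by simp
    then show "inv f (h (x + y)) = inv f (h x) + inv f (h y)"
      using inv_f by simp
  next
    show "inv f (h 0) = 0"
      using f h inv_f unfolding s_linear_def by metis
  next
    fix a x
    have "h (smP a x) = f (smL a (inv f (h x)))"
      using f h f_inv_h unfolding s_linear_def by simp
    then show "inv f (h (smP a x)) = smL a (inv f (h x))"
      using inv_f by simp
  qed
qed

lemma subsemimodule_range:
  assumes "s_linear smX smY f"
  shows "subsemimodule smY (range f)"
proof -
  have "f 0 = 0" and "f x + f y = f (x + y)" and "smY a (f x) = f (smX a x)" for a x y
    using assms unfolding s_linear_def by simp_all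
  then show ?thesis
    unfolding subsemimodule_def by (auto intro: range_eqI[of _ f 0])
qed

lemma subtractive_Ker:
  assumes "s_linear smX smY h"
  shows "subtractive (Ker h)"
  unfolding subtractive_def
proof (intro allI impI)
  fix m k k' assume "k \<in> Ker h" "k' \<in> Ker h" "m + k = k'"
  moreover have "h (m + k) = h m + h k"
    using assms unfolding s_linear_def by blast
  ultimately have "h m = h k'"
    unfolding Ker_def by simp
  with \<open>k' \<in> Ker h\<close> show "m \<in> Ker h"
    unfolding Ker_def by simp
qed

locale semimodule_direct_sum =
  fixes sm :: "'s::semiring_1 \<Rightarrow> 'm::comm_monoid_add \<Rightarrow> 'm" and K K' :: "'m set"
  assumes semimodule: "semimodule sm"
    and subsemimodule_K: "subsemimodule sm K"
    and subsemimodule_K': "subsemimodule sm K'"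
    and unique_decomposition: "\<forall>m. \<exists>!p. fst p \<in> K \<and> snd p \<in> K' \<and> m = fst p + snd p"
begin

definition decompose :: "'m \<Rightarrow> 'm \<times> 'm" where
  "decompose m = (THE p. fst p \<in> K \<and> snd p \<in> K' \<and> m = fst p + snd p)"

definition proj :: "'m \<Rightarrow> 'm" where
  "proj m = fst (decompose m)"

definition proj' :: "'m \<Rightarrow> 'm" where
  "proj' m = snd (decompose m)"

lemma proj_in: "proj m \<in> K"
  and proj'_in: "proj' m \<in> K'"
  and proj_add_proj': "m = proj m + proj' m"
  using theI'[OF unique_decomposition[rule_format, of m]]
  unfolding proj_def proj'_def decompose_def by auto

lemma proj_eq:
  assumes "a \<in> K" and "b \<in> K'" and "m = a + b"
  shows "proj m = a" and "proj' m = b"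
proof -
  have "decompose m = (a, b)"
    unfolding decompose_def
    by (rule the1_equality[OF unique_decomposition[rule_format]]) (use assms in auto)
  then show "proj m = a" and "proj' m = b"
    unfolding proj_def proj'_def by simp_all
qed

lemma s_linear_proj: "s_linear sm sm proj"
  unfolding s_linear_def
proof (intro conjI allI)
  fix x y
  have "x + y = (proj x + proj y) + (proj' x + proj' y)"
    by (metis proj_add_proj' add.assoc add.left_commute)
  moreover have "proj x + proj y \<in> K" and "proj' x + proj' y \<in> K'"
    using proj_in proj'_in subsemimodule_K subsemimodule_K' unfolding subsemimodule_def by auto
  ultimately show "proj (x + y) = proj x + proj y"
    by (rule proj_eq(1)[rotated 2])
next
  show "proj 0 = 0"
    using proj_eq(1)[of 0 0 0] subsemimodule_K subsemimodule_K'
    unfolding subsemimodule_def by simp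
next
  fix a x
  have "sm a x = sm a (proj x) + sm a (proj' x)"
    using semimodule proj_add_proj' unfolding semimodule_def by metis
  moreover have "sm a (proj x) \<in> K" and "sm a (proj' x) \<in> K'"
    using proj_in proj'_in subsemimodule_K subsemimodule_K' unfolding subsemimodule_def by auto
  ultimately show "proj (sm a x) = sm a (proj x)"
    by (rule proj_eq(1)[rotated 2])
qed

end

locale complemented_kernel = semimodule_direct_sum sm "Ker g" K'
  for sm :: "'s::semiring_1 \<Rightarrow> 'm::comm_monoid_add \<Rightarrow> 'm"
    and g :: "'m \<Rightarrow> 'n::comm_monoid_add" and K' +
  fixes smN :: "'s \<Rightarrow> 'n \<Rightarrow> 'n"
  assumes s_linear_g: "s_linear sm smN g"
    and surj_g: "surj g"
    and k_normal_g: "k_normal g"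
begin

lemma g_proj: "g (proj m) = 0"
  using proj_in unfolding Ker_def by simp

lemma g_proj': "g (proj' m) = g m"
  using s_linear_g g_proj proj_add_proj'[of m] unfolding s_linear_def by (metis add_0)

lemma inj_on_complement: "inj_on g K'"
proof (rule inj_onI)
  fix a b assume "a \<in> K'" "b \<in> K'" "g a = g b"
  then obtain k k' where "k \<in> Ker g" "k' \<in> Ker g" "a + k = b + k'"
    using k_normal_g unfolding k_normal_def by blast
  then have "proj' (a + k) = a" and "proj' (a + k) = b"
    using proj_eq(2) \<open>a \<in> K'\<close> \<open>b \<in> K'\<close> by (metis add.commute)+
  then show "a = b" by simp
qed

definition splitting :: "'n \<Rightarrow> 'm" where
  "splitting n = proj' (inv g n)"

lemma splitting_in: "splitting n \<in> K'"
  unfolding splitting_def by (rule proj'_in)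

lemma g_splitting: "g (splitting n) = n"
  unfolding splitting_def g_proj' using surj_g by (rule surj_f_inv_f)

lemma splitting_eqI:
  assumes "m \<in> K'" and "g m = n"
  shows "splitting n = m"
  using inj_on_complement splitting_in assms g_splitting by (metis inj_onD)

lemma s_linear_splitting: "s_linear smN sm splitting"
  unfolding s_linear_def
proof (intro conjI allI)
  fix x y
  show "splitting (x + y) = splitting x + splitting y"
    using splitting_in subsemimodule_K' s_linear_g g_splitting
    by (intro splitting_eqI) (auto simp: subsemimodule_def s_linear_def)
next
  show "splitting 0 = 0"
    using subsemimodule_K' s_linear_g
    by (intro splitting_eqI) (auto simp: subsemimodule_def s_linear_def)
next
  fix a x
  show "splitting (smN a x) = sm a (splitting x)"
    using splitting_in subsemimodule_K' s_linear_g g_splitting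
    by (intro splitting_eqI) (auto simp: subsemimodule_def s_linear_def)
qed

lemma proj_add_splitting: "m = proj m + splitting (g m)"
  using proj_add_proj'[of m] splitting_eqI[OF proj'_in g_proj'] by simp

end

lemma hom_sequence_exact_if_split:
  assumes ses: "semimodule_ses smL smM smN f g"
    and p: "s_linear smM smM p" "\<And>m. g (p m) = 0"
    and s: "s_linear smN smM s" "\<And>n. g (s n) = n"
    and decomposition: "\<And>m. m = p m + s (g m)"
  shows "hom_sequence_exact smP smL smM smN f g"
proof -
  have f: "s_linear smL smM f" and g: "s_linear smM smN g"
    and "inj f" and range_f: "range f = Ker g"
    using ses unfolding semimodule_ses_def by auto
  let ?kernel = "{h \<in> Hom smP smM. g \<circ> h = (\<lambda>x. 0)}"
  have "inj_on ((\<circ>) f) (Hom smP smL)"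
    using \<open>inj f\<close> by (auto intro!: inj_onI simp: fun_eq_iff inj_def)
  moreover have "(\<circ>) f ` Hom smP smL = ?kernel"
  proof (intro equalityI subsetI)
    fix h assume "h \<in> (\<circ>) f ` Hom smP smL"
    then show "h \<in> ?kernel"
      using f range_f s_linear_comp unfolding Hom_def Ker_def by fastforce
  next
    fix h assume h: "h \<in> ?kernel"
    then have "range h \<subseteq> range f"
      using range_f unfolding Ker_def by (auto simp: fun_eq_iff)
    then have "inv f \<circ> h \<in> Hom smP smL" and "h = f \<circ> (inv f \<circ> h)"
      using s_linear_inv_comp[OF \<open>inj f\<close> f] h unfolding Hom_def
      by (auto simp: fun_eq_iff f_inv_into_f range_subsetD)
    then show "h \<in> (\<circ>) f ` Hom smP smL" by blast
  qed
  moreover have "(\<circ>) g ` Hom smP smM = Hom smP smN"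
  proof (intro equalityI subsetI)
    fix h assume "h \<in> (\<circ>) g ` Hom smP smM"
    then show "h \<in> Hom smP smN"
      using g s_linear_comp unfolding Hom_def by blast
  next
    fix h assume "h \<in> Hom smP smN"
    then have "s \<circ> h \<in> Hom smP smM" and "h = g \<circ> (s \<circ> h)"
      using s s_linear_comp unfolding Hom_def by (auto simp: fun_eq_iff)
    then show "h \<in> (\<circ>) g ` Hom smP smM" by blast
  qed
  moreover have "\<exists>k\<in>?kernel. \<exists>k'\<in>?kernel. (\<lambda>x. h x + k x) = (\<lambda>x. h' x + k' x)"
    if "h \<in> Hom smP smM" "h' \<in> Hom smP smM" "g \<circ> h = g \<circ> h'" for h h'
  proof (intro bexI)
    have "h x + p (h' x) = h' x + p (h x)" for x
    proof -
      have "g (h x) = g (h' x)"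
        using \<open>g \<circ> h = g \<circ> h'\<close> by (simp add: fun_eq_iff)
      then have "h x + p (h' x) = p (h x) + p (h' x) + s (g (h' x))"
        using decomposition[of "h x"] by (metis add.commute add.left_commute)
      also have "\<dots> = h' x + p (h x)"
        using decomposition[of "h' x"] by (metis add.commute add.left_commute)
      finally show ?thesis .
    qed
    then show "(\<lambda>x. h x + (p \<circ> h') x) = (\<lambda>x. h' x + (p \<circ> h) x)"
      by simp
    show "p \<circ> h \<in> ?kernel" and "p \<circ> h' \<in> ?kernel"
      using that p s_linear_comp unfolding Hom_def by (auto simp: fun_eq_iff)
  qed
  ultimately show ?thesis
    unfolding hom_sequence_exact_def monoid_ses_def by blast
qed

theorem mainTheorem9:
  fixes smM :: "'s::semiring_1 \<Rightarrow> 'm::comm_monoid_add \<Rightarrow> 'm"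
    and smP :: "'s \<Rightarrow> 'p::comm_monoid_add \<Rightarrow> 'p"
    and smL :: "'s \<Rightarrow> 'l::comm_monoid_add \<Rightarrow> 'l"
    and smN :: "'s \<Rightarrow> 'n::comm_monoid_add \<Rightarrow> 'n"
  assumes "semimodule smM"
    and "\<forall>K. subsemimodule smM K \<and> subtractive K \<longrightarrow> direct_summand smM K"
    and "semimodule smP" and "semimodule smL" and "semimodule smN"
  shows "e_projective_wrt smP smM smL smN"
  unfolding e_projective_wrt_def
proof (intro allI impI)
  fix f :: "'l \<Rightarrow> 'm" and g :: "'m \<Rightarrow> 'n"
  assume ses: "semimodule_ses smL smM smN f g"
  then have f: "s_linear smL smM f" and g: "s_linear smM smN g"
    and "range f = Ker g" and "surj g" and "k_normal g"
    unfolding semimodule_ses_def by auto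
  then have "subsemimodule smM (Ker g)"
    using subsemimodule_range[OF f] by simp
  then obtain K' where "semimodule_direct_sum smM (Ker g) K'"
    using assms(1,2) subtractive_Ker[OF g]
    unfolding direct_summand_def semimodule_direct_sum_def by blast
  then interpret complemented_kernel smM g K' smN
    using g \<open>surj g\<close> \<open>k_normal g\<close> by unfold_locales (auto simp: semimodule_direct_sum_def)
  show "hom_sequence_exact smP smL smM smN f g"
    using ses s_linear_proj g_proj s_linear_splitting g_splitting proj_add_splitting
    by (rule hom_sequence_exact_if_split)
qed

end
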